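(* Let $p_1,\dots,p_d\in(0,1)$ with $\sum_{k=1}^dp_k=1$. Sample tasks $h_1,h_2,\dots$ independently as follows: draw $k\in[d]$ with $\Pr[k=i]=p_i$, then draw $h'$ uniformly from $\mathcal{F}^d_k$ and set the task to $h'\circ\psi^{-1}$. Consider representations $\Phi:\{-1,1\}^m\to\mathcal{Z}$ for which $T_\Phi:=\Phi\circ\psi$ is a bijection of $\mathcal{Z}$ (these are exactly the representations for which, for every possible task sequence, functions $g_i:\mathcal{Z}\to\mathbb{R}$ with $g_i\circ\Phi\in\mathcal{H}(h_i)$ exist; such $g_i$ are then unique). For such $\Phi$ consider the objective $\frac1n\widehat{\deg}(g\circ\Phi)=\frac1n\big(\sum_{i=1}^n\deg(g_i)+\sum_{j=1}^d\deg(\Phi_j)\big)$ of the problem $\min_{\Phi,g}\frac1n\widehat{\deg}(g\circ\Phi)$ subject to $g_i\circ\Phi\in\mathcal{H}(h_i)$ for all $i\in[n]$. Then, almost surely, as $n\to\infty$ this objective converges for every such $\Phi$, and every $\Phi^*$ minimizing the limit learns the world model up to negations and permutations: there exist a permutation $i_1,\dots,i_d$ of $1,\dots,d$ and signs $s_1,\dots,s_d\in\{-1,1\}$ such that $\Phi^*_j(\psi(z))=s_jz_{i_j}$ for every $j\in[d]$ and every $z\in\mathcal{Z}$.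
   Context: Standing setup: integers $m\ge d\ge 1$, $\mathcal{Z}=\{-1,1\}^d$, $\psi:\mathcal{Z}\to\{-1,1\}^m$ injective, $\mathcal{X}:=\psi(\mathcal{Z})$, latent distribution with full support. For $f:\{-1,1\}^n\to\mathbb{R}$, $f=\sum_{S\subseteq[n]}\hat f(S)\chi_S$, $\chi_S(x)=\prod_{i\in S}x_i$, $\deg(f)=\max\{|S|:\hat f(S)\ne0\}$ (0 for constants). $\mathcal{H}(h)$ is the set of $f:\{-1,1\}^m\to\mathbb{R}$ agreeing with the task $h$ on $\mathcal{X}$. Finite-precision convention: fix a finite $V\subset\mathbb{R}$ with $\{-1,1\}\subseteq V$; $\mathcal{F}^d$ is the set of all functions $\{-1,1\}^d\to V$ and $\mathcal{F}^d_k:=\{h\in\mathcal{F}^d:\deg(h)\le k\}$ (a $k$-degree task is one of the form $h'\circ\psi^{-1}$ with $h'\in\mathcal{F}^d_k$). *)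

theory Defs
  imports "HOL-Probability.Probability"
begin

text \<open>The hypercube {-1,1}^n, coordinates indexed 0..n-1; points are
  functions nat => real, extended by the value 1 beyond n (canonical representative).\<close>
definition cube :: "nat \<Rightarrow> (nat \<Rightarrow> real) set" where
  "cube n = {x. (\<forall>i<n. x i \<in> {-1, 1}) \<and> (\<forall>i\<ge>n. x i = 1)}"

definition chi :: "nat set \<Rightarrow> (nat \<Rightarrow> real) \<Rightarrow> real" where
  "chi S x = (\<Prod>i\<in>S. x i)"

definition fhat :: "nat \<Rightarrow> ((nat \<Rightarrow> real) \<Rightarrow> real) \<Rightarrow> nat set \<Rightarrow> real" where
  "fhat n f S = (\<Sum>x\<in>cube n. f x * chi S x) / 2 ^ n"

definition fdeg :: "nat \<Rightarrow> ((nat \<Rightarrow> real) \<Rightarrow> real) \<Rightarrow> nat" where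
  "fdeg n f = Max ({card S | S. S \<subseteq> {..<n} \<and> fhat n f S \<noteq> 0} \<union> {0})"

definition Hset :: "(nat \<Rightarrow> real) set \<Rightarrow> ((nat \<Rightarrow> real) \<Rightarrow> real) \<Rightarrow> ((nat \<Rightarrow> real) \<Rightarrow> real) set" where
  "Hset X h = {f. \<forall>x\<in>X. f x = h x}"

text \<open>F^d: functions {-1,1}^d -> V (canonically 0 off the cube, so the set is finite).\<close>
definition Fd :: "real set \<Rightarrow> nat \<Rightarrow> ((nat \<Rightarrow> real) \<Rightarrow> real) set" where
  "Fd V d = {h. (\<forall>x\<in>cube d. h x \<in> V) \<and> (\<forall>x. x \<notin> cube d \<longrightarrow> h x = 0)}"

definition Fdk :: "real set \<Rightarrow> nat \<Rightarrow> nat \<Rightarrow> ((nat \<Rightarrow> real) \<Rightarrow> real) set" where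
  "Fdk V d k = {h \<in> Fd V d. fdeg d h \<le> k}"

text \<open>Task distribution: k ~ K, then h' uniform on F^d_k. (The task is h' o psi^-1.)\<close>
definition task_pmf :: "real set \<Rightarrow> nat \<Rightarrow> nat pmf \<Rightarrow> ((nat \<Rightarrow> real) \<Rightarrow> real) pmf" where
  "task_pmf V d K = bind_pmf K (\<lambda>k. pmf_of_set (Fdk V d k))"

definition admissible :: "nat \<Rightarrow> nat \<Rightarrow> ((nat \<Rightarrow> real) \<Rightarrow> (nat \<Rightarrow> real))
    \<Rightarrow> ((nat \<Rightarrow> real) \<Rightarrow> (nat \<Rightarrow> real)) set" where
  "admissible m d \<psi> = {\<Phi>. (\<forall>x\<in>cube m. \<Phi> x \<in> cube d) \<and> bij_betw (\<Phi> \<circ> \<psi>) (cube d) (cube d)}"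

definition task_deg :: "nat \<Rightarrow> ((nat \<Rightarrow> real) \<Rightarrow> (nat \<Rightarrow> real)) \<Rightarrow> ((nat \<Rightarrow> real) \<Rightarrow> (nat \<Rightarrow> real))
    \<Rightarrow> ((nat \<Rightarrow> real) \<Rightarrow> real) \<Rightarrow> nat" where
  "task_deg d \<psi> \<Phi> h' = Min {fdeg d g | g. g \<circ> \<Phi> \<in> Hset (\<psi> ` cube d) (h' \<circ> inv_into (cube d) \<psi>)}"

definition objective :: "nat \<Rightarrow> nat \<Rightarrow> ((nat \<Rightarrow> real) \<Rightarrow> (nat \<Rightarrow> real))
    \<Rightarrow> ((nat \<Rightarrow> real) \<Rightarrow> (nat \<Rightarrow> real)) \<Rightarrow> ((nat \<Rightarrow> real) \<Rightarrow> real) stream \<Rightarrow> nat \<Rightarrow> real" where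
  "objective m d \<psi> \<Phi> w n =
     ((\<Sum>i<n. real (task_deg d \<psi> \<Phi> (w !! i))) + (\<Sum>j<d. real (fdeg m (\<lambda>x. \<Phi> x j)))) / real n"

end

theory Submission
  imports Defs
begin

(* For an admissible representation Phi the function g_i is forced to be h_i' o T^-1 on the
   cube, where T = Phi o psi is a bijection of the cube; the degrees of the Phi_j contribute only
   O(1/n). So the objective is a sample mean of deg (h_i' o T^-1), and since there are only
   finitely many T, Hoeffding's inequality with Borel-Cantelli makes all these means converge
   almost surely to their expectations E_T simultaneously.

   The map h |-> h o T^-1 permutes F^d, and F^d_k is precisely the set of members of F^d of
   degree at most k. Hence for each k it can only increase the total degree over F^d_k, with
   equality only if it maps F^d_k onto itself. Comparing with T = id, a minimiser must preserve
   F^d_1 (this is where p_1 > 0 enters), so every coordinate of T is a +-1-valued function of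
   degree at most 1, i.e. a constant or a signed coordinate; surjectivity of T rules out
   constants and forces the coordinates used to be distinct. *)

section \<open>A strong law of large numbers for bounded i.i.d. samples\<close>

lemma distr_snth_stream_space:
  "distr (stream_space (measure_pmf P)) (measure_pmf P) (\<lambda>w. w !! i) = measure_pmf P"
proof -
  let ?M = "measure_pmf P"
  interpret PP: product_prob_space "\<lambda>_. ?M" UNIV
    by unfold_locales
  have "distr (stream_space ?M) ?M (\<lambda>w. w !! i)
      = distr (distr (\<Pi>\<^sub>M i\<in>UNIV. ?M) (stream_space ?M) to_stream) ?M (\<lambda>w. w !! i)"
    by (subst stream_space_eq_distr) simp
  also have "\<dots> = distr (\<Pi>\<^sub>M i\<in>UNIV. ?M) ?M ((\<lambda>w. w !! i) \<circ> to_stream)"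
    by (rule distr_distr) auto
  also have "\<dots> = distr (\<Pi>\<^sub>M i\<in>UNIV. ?M) ?M (\<lambda>\<omega>. \<omega> i)"
    by (rule distr_cong) (auto simp: to_stream_def)
  also have "\<dots> = ?M"
    by (rule PP.PiM_component) simp
  finally show ?thesis .
qed

lemma indep_vars_snth:
  assumes "I \<noteq> {}" "finite I"
  shows "prob_space.indep_vars (stream_space (measure_pmf P)) (\<lambda>_. measure_pmf P) (\<lambda>i w. w !! i) I"
proof -
  let ?M = "measure_pmf P"
  interpret S: prob_space "stream_space ?M"
    by (rule prob_space.prob_space_stream_space) (rule prob_space_measure_pmf)
  interpret PP: product_prob_space "\<lambda>_. ?M" UNIV
    by unfold_locales
  have "distr (stream_space ?M) (\<Pi>\<^sub>M i\<in>I. ?M) (\<lambda>w. \<lambda>i\<in>I. w !! i)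
      = distr (distr (\<Pi>\<^sub>M i\<in>UNIV. ?M) (stream_space ?M) to_stream) (\<Pi>\<^sub>M i\<in>I. ?M) (\<lambda>w. \<lambda>i\<in>I. w !! i)"
    by (subst stream_space_eq_distr) simp
  also have "\<dots> = distr (\<Pi>\<^sub>M i\<in>UNIV. ?M) (\<Pi>\<^sub>M i\<in>I. ?M) ((\<lambda>w. \<lambda>i\<in>I. w !! i) \<circ> to_stream)"
    by (rule distr_distr) auto
  also have "\<dots> = distr (\<Pi>\<^sub>M i\<in>UNIV. ?M) (\<Pi>\<^sub>M i\<in>I. ?M) (\<lambda>x. restrict x I)"
    by (rule distr_cong) (auto simp: to_stream_def)
  also have "\<dots> = (\<Pi>\<^sub>M i\<in>I. ?M)"
    by (rule PP.distr_PiM_restrict_finite) (use assms in auto)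
  finally show ?thesis
    by (subst S.indep_vars_iff_distr_eq_PiM[OF assms(1)]) (auto simp: distr_snth_stream_space)
qed

lemma prob_sample_mean_deviation_le:
  fixes f :: "'a \<Rightarrow> real"
  assumes bnd: "\<And>x. f x \<in> {a..b}" and ab: "a < b" and e: "0 \<le> e"
  shows "measure (stream_space (measure_pmf P))
           {w \<in> space (stream_space (measure_pmf P)).
              e \<le> \<bar>(\<Sum>i<n. f (w !! i)) / real n - measure_pmf.expectation P f\<bar>}
         \<le> 2 * exp (-2 * e\<^sup>2 / (b - a)\<^sup>2) ^ n"
proof (cases "n = 0")
  case True
  interpret S: prob_space "stream_space (measure_pmf P)"
    by (rule prob_space.prob_space_stream_space) (rule prob_space_measure_pmf)
  have "measure (stream_space (measure_pmf P)) A \<le> 2" for A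
    using S.prob_le_1[of A] by linarith
  then show ?thesis
    using True by simp
next
  case False
  let ?M = "stream_space (measure_pmf P)"
  have [measurable]: "f \<in> borel_measurable (measure_pmf P)"
    by simp
  interpret S: prob_space ?M
    by (rule prob_space.prob_space_stream_space) (rule prob_space_measure_pmf)
  interpret H: Hoeffding_ineq_iid ?M "{..<n}" "\<lambda>i w. f (w !! i)" "\<lambda>w. f (w !! 0)" a b
    "S.expectation (\<lambda>w. f (w !! 0))"
  proof unfold_locales
    show "S.indep_vars (\<lambda>_. borel) (\<lambda>i w. f (w !! i)) {..<n}"
      using S.indep_vars_compose2[OF indep_vars_snth[of "{..<n}" P], of "\<lambda>i. f" "\<lambda>_. borel"] False
      by auto
    show "distr ?M borel (\<lambda>w. f (w !! i)) = distr ?M borel (\<lambda>w. f (w !! 0))" for i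
    proof -
      have "distr ?M borel (\<lambda>w. f (w !! i)) = distr (distr ?M (measure_pmf P) (\<lambda>w. w !! i)) borel f"
        by (subst distr_distr) (auto simp: comp_def)
      also have "\<dots> = distr (distr ?M (measure_pmf P) (\<lambda>w. w !! 0)) borel f"
        by (simp only: distr_snth_stream_space)
      also have "\<dots> = distr ?M borel (\<lambda>w. f (w !! 0))"
        by (subst distr_distr) (auto simp: comp_def)
      finally show ?thesis .
    qed
  qed (use bnd in auto)
  have "S.expectation (\<lambda>w. f (w !! 0)) = integral\<^sup>L (distr ?M (measure_pmf P) (\<lambda>w. w !! 0)) f"
    by (subst integral_distr) auto
  then have mu: "S.expectation (\<lambda>w. f (w !! 0)) = measure_pmf.expectation P f"
    by (simp only: distr_snth_stream_space)
  have "exp (- 2 * real n * e\<^sup>2 / (b - a)\<^sup>2) = exp (-2 * e\<^sup>2 / (b - a)\<^sup>2) ^ n"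
    by (simp add: exp_of_nat_mult[symmetric] field_simps)
  then show ?thesis
    using H.Hoeffding_ineq_abs_ge'[OF e ab] False unfolding mu by (simp add: lessThan_empty_iff)
qed

lemma AE_sample_mean_tendsto:
  fixes f :: "'a \<Rightarrow> real"
  assumes bnd: "\<And>x. f x \<in> {a..b}" and ab: "a < b"
  shows "AE w in stream_space (measure_pmf P).
           (\<lambda>n. (\<Sum>i<n. f (w !! i)) / real n) \<longlonglongrightarrow> measure_pmf.expectation P f"
proof -
  let ?M = "stream_space (measure_pmf P)"
  let ?mean = "\<lambda>w n. (\<Sum>i<n. f (w !! i)) / real n"
  let ?mu = "measure_pmf.expectation P f"
  interpret S: prob_space ?M
    by (rule prob_space.prob_space_stream_space) (rule prob_space_measure_pmf)
  have [measurable]: "f \<in> borel_measurable (measure_pmf P)"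
    by simp
  have close: "AE w in ?M. eventually (\<lambda>n. \<bar>?mean w n - ?mu\<bar> < e) sequentially" if "e > 0" for e
  proof -
    define A where "A n = {w \<in> space ?M. e \<le> \<bar>?mean w n - ?mu\<bar>}" for n
    have [measurable]: "A n \<in> sets ?M" for n
      unfolding A_def by measurable
    have "exp (-2 * e\<^sup>2 / (b - a)\<^sup>2) < 1"
      using that ab by simp
    then have "summable (\<lambda>n. 2 * exp (-2 * e\<^sup>2 / (b - a)\<^sup>2) ^ n)"
      by (intro summable_mult summable_geometric) simp
    moreover have "norm (measure ?M (A n)) \<le> 2 * exp (-2 * e\<^sup>2 / (b - a)\<^sup>2) ^ n" for n
      using prob_sample_mean_deviation_le[OF bnd ab less_imp_le[OF that], where P=P and n=n] by (simp add: A_def)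
    ultimately have "summable (\<lambda>n. measure ?M (A n))"
      by (rule summable_comparison_test'[where N=0])
    then have "AE w in ?M. eventually (\<lambda>n. w \<in> space ?M - A n) sequentially"
      by (intro borel_cantelli_AE1) (auto simp: S.emeasure_eq_measure)
    then show ?thesis
      by eventually_elim (auto elim!: eventually_mono simp: A_def not_le)
  qed
  have "AE w in ?M. \<forall>k::nat. eventually (\<lambda>n. \<bar>?mean w n - ?mu\<bar> < inverse (real (Suc k))) sequentially"
    by (subst AE_all_countable) (auto intro: close)
  then show ?thesis
  proof eventually_elim
    case (elim w)
    show ?case
    proof (rule tendstoI)
      fix e :: real
      assume "e > 0"
      then obtain k where k: "inverse (real (Suc k)) < e"
        using reals_Archimedean by blast
      show "eventually (\<lambda>n. dist (?mean w n) ?mu < e) sequentially"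
        using elim[rule_format, of k] by eventually_elim (use k in \<open>auto simp: dist_real_def\<close>)
    qed
  qed
qed

section \<open>Fourier analysis on the cube\<close>

lemma finite_cube: "finite (cube n)"
proof -
  have "cube n \<subseteq> (\<lambda>b i. if i < n then b i else 1) ` ({..<n} \<rightarrow>\<^sub>E {-1, 1})"
  proof
    fix x
    assume x: "x \<in> cube n"
    then have "x = (\<lambda>i. if i < n then restrict x {..<n} i else 1)"
      by (auto simp: cube_def)
    moreover have "restrict x {..<n} \<in> {..<n} \<rightarrow>\<^sub>E {-1, 1}"
      using x by (auto simp: cube_def)
    ultimately show "x \<in> (\<lambda>b i. if i < n then b i else 1) ` ({..<n} \<rightarrow>\<^sub>E {-1, 1})"
      by blast
  qed
  then show ?thesis
    by (rule finite_subset) (intro finite_imageI finite_PiE; auto)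
qed

lemma cube_coord: "x \<in> cube n \<Longrightarrow> x i \<in> {-1, 1}"
  by (cases "i < n") (auto simp: cube_def)

lemma cube_coord_mult_self: "x \<in> cube n \<Longrightarrow> x i * x i = 1"
  using cube_coord[of x n i] by auto

lemma one_in_cube: "(\<lambda>_. 1) \<in> cube n"
  by (simp add: cube_def)

lemma fun_upd_in_cube: "x \<in> cube n \<Longrightarrow> j < n \<Longrightarrow> v \<in> {-1, 1} \<Longrightarrow> x(j := v) \<in> cube n"
  by (auto simp: cube_def)

definition flip :: "nat \<Rightarrow> (nat \<Rightarrow> real) \<Rightarrow> (nat \<Rightarrow> real)" where
  "flip j x = x(j := - x j)"

lemma flip_in_cube: "j < n \<Longrightarrow> x \<in> cube n \<Longrightarrow> flip j x \<in> cube n"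
  by (auto simp: cube_def flip_def)

lemma flip_flip [simp]: "flip j (flip j x) = x"
  by (auto simp: flip_def)

lemma bij_betw_flip: "j < n \<Longrightarrow> bij_betw (flip j) (cube n) (cube n)"
  by (rule bij_betwI[where g="flip j"]) (auto simp: flip_in_cube)

lemma chi_flip:
  assumes "j \<in> T" "finite T"
  shows "chi T (flip j x) = - chi T x"
proof -
  have "(\<Prod>i\<in>T-{j}. flip j x i) = (\<Prod>i\<in>T-{j}. x i)"
    by (rule prod.cong) (auto simp: flip_def)
  then show ?thesis
    using assms by (simp add: chi_def prod.remove flip_def)
qed

lemma sum_chi_eq_0:
  assumes "T \<subseteq> {..<n}" "T \<noteq> {}"
  shows "(\<Sum>x\<in>cube n. chi T x) = 0"
proof -
  obtain j where j: "j \<in> T"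
    using assms by auto
  have "(\<Sum>x\<in>cube n. chi T x) = (\<Sum>x\<in>cube n. chi T (flip j x))"
    using j assms by (intro sum.reindex_bij_betw[symmetric] bij_betw_flip) auto
  also have "\<dots> = - (\<Sum>x\<in>cube n. chi T x)"
    using j assms finite_subset[of T "{..<n}"] by (simp add: chi_flip sum_negf)
  finally show ?thesis
    by simp
qed

lemma coord_mult_chi:
  assumes "x \<in> cube n" "finite S"
  shows "x i * chi S x = chi (if i \<in> S then S - {i} else insert i S) x"
proof (cases "i \<in> S")
  case True
  then have "chi S x = x i * chi (S - {i}) x"
    using assms by (simp add: chi_def prod.remove)
  then show ?thesis
    using True cube_coord_mult_self[OF assms(1), of i] by (simp add: mult.assoc[symmetric])
next
  case False
  then show ?thesis
    using assms by (simp add: chi_def)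
qed

lemma sum_chi_mult_chi:
  assumes x: "x \<in> cube n" and y: "y \<in> cube n"
  shows "(\<Sum>S\<in>Pow {..<n}. chi S x * chi S y) = (if x = y then 2 ^ n else 0)"
proof -
  have "(\<Sum>S\<in>Pow {..<n}. chi S x * chi S y) = (\<Sum>S\<in>Pow {..<n}. (\<Prod>i\<in>S. x i * y i) * (\<Prod>i\<in>{..<n}-S. 1))"
    by (simp add: chi_def prod.distrib)
  also have "\<dots> = (\<Prod>i<n. x i * y i + 1)"
    by (rule prod_add[symmetric]) simp
  also have "\<dots> = (if x = y then 2 ^ n else 0)"
  proof (cases "x = y")
    case True
    then show ?thesis
      using cube_coord_mult_self[OF x] by simp
  next
    case False
    then obtain i where i: "x i \<noteq> y i"
      by auto
    then have "i < n"
      using x y by (cases "i < n") (auto simp: cube_def)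
    moreover have "x i * y i + 1 = 0"
      using i cube_coord[OF x, of i] cube_coord[OF y, of i] by auto
    ultimately show ?thesis
      using False by (auto intro: prod_zero)
  qed
  finally show ?thesis .
qed

lemma fourier_expansion:
  assumes y: "y \<in> cube n"
  shows "f y = (\<Sum>S\<in>Pow {..<n}. fhat n f S * chi S y)"
proof -
  have "(\<Sum>S\<in>Pow {..<n}. fhat n f S * chi S y)
      = (\<Sum>S\<in>Pow {..<n}. \<Sum>x\<in>cube n. f x * (chi S x * chi S y) / 2 ^ n)"
    by (simp add: fhat_def sum_divide_distrib sum_distrib_right mult.assoc)
  also have "\<dots> = (\<Sum>x\<in>cube n. f x * (\<Sum>S\<in>Pow {..<n}. chi S x * chi S y) / 2 ^ n)"
    by (subst sum.swap) (simp add: sum_divide_distrib sum_distrib_left)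
  also have "\<dots> = (\<Sum>x\<in>cube n. if x = y then f y else 0)"
    by (rule sum.cong) (auto simp: sum_chi_mult_chi y)
  also have "\<dots> = f y"
    using y finite_cube by simp
  finally show ?thesis
    by simp
qed

lemma finite_fdeg_support: "finite {card S | S. S \<subseteq> {..<n} \<and> fhat n f S \<noteq> 0}"
  by (rule finite_subset[of _ "card ` Pow {..<n}"]) auto

lemma fdeg_le_iff: "fdeg n f \<le> k \<longleftrightarrow> (\<forall>S. S \<subseteq> {..<n} \<and> fhat n f S \<noteq> 0 \<longrightarrow> card S \<le> k)"
  unfolding fdeg_def by (subst Max_le_iff) (use finite_fdeg_support in auto)

lemma fdeg_le_dim: "fdeg n f \<le> n"
  unfolding fdeg_le_iff by (auto dest: card_mono[rotated, of _ "{..<n}"])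

lemma fdeg_cong: "(\<And>x. x \<in> cube n \<Longrightarrow> f x = g x) \<Longrightarrow> fdeg n f = fdeg n g"
  unfolding fdeg_def fhat_def by (simp cong: sum.cong)

lemma fdeg_const: "fdeg n (\<lambda>x. c) = 0"
proof -
  have "fhat n (\<lambda>x. c) S = 0" if "S \<subseteq> {..<n}" "S \<noteq> {}" for S
    using sum_chi_eq_0[OF that] by (simp add: fhat_def sum_distrib_left[symmetric])
  then have "fdeg n (\<lambda>x. c) \<le> 0"
    unfolding fdeg_le_iff by (metis card.empty order_refl)
  then show ?thesis
    by simp
qed

lemma fdeg_coord_le_1:
  assumes "i < n"
  shows "fdeg n (\<lambda>x. x i) \<le> 1"
  unfolding fdeg_le_iff
proof (intro allI impI)
  fix S
  assume S: "S \<subseteq> {..<n} \<and> fhat n (\<lambda>x. x i) S \<noteq> 0"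
  have fin: "finite S"
    using S finite_subset by blast
  define T where "T = (if i \<in> S then S - {i} else insert i S)"
  have "(\<Sum>x\<in>cube n. chi T x) = (\<Sum>x\<in>cube n. x i * chi S x)"
    by (rule sum.cong) (auto simp: coord_mult_chi fin T_def)
  also have "\<dots> \<noteq> 0"
    using S by (simp add: fhat_def)
  finally have "(\<Sum>x\<in>cube n. chi T x) \<noteq> 0" .
  moreover have "T \<subseteq> {..<n}"
    using S assms by (auto simp: T_def)
  ultimately have "T = {}"
    using sum_chi_eq_0[of T n] by blast
  then have "S \<subseteq> {i}"
    by (auto simp: T_def split: if_splits)
  then show "card S \<le> 1"
    using card_mono[of "{i}" S] by simp
qed

section \<open>Boolean functions of degree one\<close>

lemma fdeg_le_1_affine:
  assumes "fdeg n f \<le> 1" and y: "y \<in> cube n"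
  shows "f y = fhat n f {} + (\<Sum>j<n. fhat n f {j} * y j)"
proof -
  let ?L = "insert {} ((\<lambda>j. {j}) ` {..<n})"
  have "fhat n f S = 0" if S: "S \<in> Pow {..<n} - ?L" for S
  proof -
    have "card S \<noteq> 1"
      using S by (auto simp: card_Suc_eq)
    moreover have "card S \<noteq> 0"
      using S by (auto dest: finite_subset)
    ultimately have "\<not> card S \<le> 1"
      by simp
    then show ?thesis
      using assms(1) S unfolding fdeg_le_iff by blast
  qed
  then have "(\<Sum>S\<in>Pow {..<n}. fhat n f S * chi S y) = (\<Sum>S\<in>?L. fhat n f S * chi S y)"
    by (intro sum.mono_neutral_right) auto
  also have "\<dots> = fhat n f {} + (\<Sum>S\<in>(\<lambda>j. {j}) ` {..<n}. fhat n f S * chi S y)"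
    by (subst sum.insert) (auto simp: chi_def)
  also have "(\<Sum>S\<in>(\<lambda>j. {j}) ` {..<n}. fhat n f S * chi S y) = (\<Sum>j<n. fhat n f {j} * y j)"
    by (subst sum.reindex) (auto simp: inj_on_def chi_def)
  finally show ?thesis
    using fourier_expansion[OF y] by simp
qed

lemma affine_flip_diff:
  assumes lin: "\<And>y. y \<in> cube n \<Longrightarrow> f y = c + (\<Sum>j<n. a j * y j)"
    and j: "j < n" and y: "y \<in> cube n"
  shows "f y - f (flip j y) = 2 * a j * y j"
proof -
  have "f y - f (flip j y) = (\<Sum>l<n. a l * y l - a l * flip j y l)"
    using lin[OF y] lin[OF flip_in_cube[OF j y]] by (simp add: sum_subtractf)
  also have "\<dots> = (\<Sum>l<n. if l = j then 2 * a j * y j else 0)"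
    by (rule sum.cong) (auto simp: flip_def)
  finally show ?thesis
    using j by simp
qed

text \<open>For a \<open>\<plusminus>1\<close>-valued affine function on the cube, flipping a coordinate changes the value
  by \<open>2 a\<^sub>j y\<^sub>j \<in> {-2, 0, 2}\<close>; flipping two coordinates with nonzero coefficients in the
  right direction would change it by 4.\<close>

lemma boolean_affine_coeff:
  assumes vals: "\<And>y. y \<in> cube n \<Longrightarrow> f y \<in> {-1, 1}"
    and lin: "\<And>y. y \<in> cube n \<Longrightarrow> f y = c + (\<Sum>j<n. a j * y j)"
    and j: "j < n"
  shows "a j \<in> {-1, 0, 1}"
  using affine_flip_diff[OF lin j one_in_cube] vals[OF one_in_cube]
    vals[OF flip_in_cube[OF j one_in_cube]]
  by auto

lemma boolean_affine_unique_coeff: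
  assumes vals: "\<And>y. y \<in> cube n \<Longrightarrow> f y \<in> {-1, 1}"
    and lin: "\<And>y. y \<in> cube n \<Longrightarrow> f y = c + (\<Sum>j<n. a j * y j)"
    and jl: "j < n" "l < n" "j \<noteq> l" and aj: "a j \<noteq> 0"
  shows "a l = 0"
proof (rule ccontr)
  assume al: "a l \<noteq> 0"
  have ajv: "a j \<in> {-1, 1}" and alv: "a l \<in> {-1, 1}"
    using boolean_affine_coeff[OF vals lin] jl aj al by auto
  define y where "y = ((\<lambda>_. 1)(j := a j))(l := a l)"
  have y: "y \<in> cube n"
    unfolding y_def by (intro fun_upd_in_cube one_in_cube jl ajv alv)
  have fy: "flip l y \<in> cube n"
    by (intro flip_in_cube y jl)
  have "f y - f (flip j (flip l y)) = (f y - f (flip l y)) + (f (flip l y) - f (flip j (flip l y)))"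
    by simp
  also have "\<dots> = 2 * a l * y l + 2 * a j * flip l y j"
    using affine_flip_diff[OF lin jl(2) y] affine_flip_diff[OF lin jl(1) fy] by simp
  also have "\<dots> = 4"
    using jl ajv alv by (auto simp: y_def flip_def)
  finally show False
    using vals[OF y] vals[OF flip_in_cube[OF jl(1) fy]] by auto
qed

lemma boolean_affine_const_or_signed_coord:
  assumes vals: "\<And>y. y \<in> cube n \<Longrightarrow> f y \<in> {-1, 1}"
    and lin: "\<And>y. y \<in> cube n \<Longrightarrow> f y = c + (\<Sum>j<n. a j * y j)"
  shows "(\<forall>y\<in>cube n. f y = c) \<or> (\<exists>j<n. \<exists>s\<in>{-1, 1}. \<forall>y\<in>cube n. f y = s * y j)"
proof (cases "\<forall>j<n. a j = 0")
  case True
  then show ?thesis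
    using lin by simp
next
  case False
  then obtain j where j: "j < n" "a j \<noteq> 0"
    by auto
  have ajv: "a j \<in> {-1, 1}"
    using boolean_affine_coeff[OF vals lin j(1)] j by auto
  have lin_j: "f y = c + a j * y j" if "y \<in> cube n" for y
  proof -
    have "(\<Sum>l<n. a l * y l) = (\<Sum>l<n. if l = j then a j * y j else 0)"
      by (rule sum.cong) (use boolean_affine_unique_coeff[OF vals lin j(1) _ _ j(2)] in auto)
    then show ?thesis
      using lin[OF that] j by simp
  qed
  have "c + a j \<in> {-1, 1}" "c - a j \<in> {-1, 1}"
    using vals[OF one_in_cube] vals[OF flip_in_cube[OF j(1) one_in_cube]]
      lin_j[OF one_in_cube] lin_j[OF flip_in_cube[OF j(1) one_in_cube]]
    by (auto simp: flip_def)
  then have "c = 0"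
    using ajv by auto
  then show ?thesis
    using lin_j j ajv by auto
qed

section \<open>Relabelling tasks by a bijection of the cube\<close>

lemma finite_Fd:
  assumes "finite V"
  shows "finite (Fd V d)"
proof -
  have "Fd V d \<subseteq> (\<lambda>g x. if x \<in> cube d then g x else 0) ` (cube d \<rightarrow>\<^sub>E V)"
  proof
    fix h
    assume h: "h \<in> Fd V d"
    then have "h = (\<lambda>x. if x \<in> cube d then restrict h (cube d) x else 0)"
      by (auto simp: Fd_def)
    moreover have "restrict h (cube d) \<in> cube d \<rightarrow>\<^sub>E V"
      using h by (auto simp: Fd_def)
    ultimately show "h \<in> (\<lambda>g x. if x \<in> cube d then g x else 0) ` (cube d \<rightarrow>\<^sub>E V)"
      by blast
  qed
  then show ?thesis
    by (rule finite_subset) (intro finite_imageI finite_PiE finite_cube assms)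
qed

lemma finite_Fdk: "finite V \<Longrightarrow> finite (Fdk V d k)"
  unfolding Fdk_def by (rule finite_subset[OF _ finite_Fd]) auto

lemma Fdk_nonempty:
  assumes "1 \<in> V"
  shows "Fdk V d k \<noteq> {}"
proof -
  have "fdeg d (\<lambda>x. if x \<in> cube d then 1 else 0) = fdeg d (\<lambda>x. 1)"
    by (rule fdeg_cong) simp
  then have "(\<lambda>x. if x \<in> cube d then 1 else 0) \<in> Fdk V d k"
    using assms by (simp add: Fdk_def Fd_def fdeg_const)
  then show ?thesis
    by blast
qed

lemma coord_in_Fdk_1:
  assumes "{-1, 1} \<subseteq> V" "i < d"
  shows "(\<lambda>x. if x \<in> cube d then x i else 0) \<in> Fdk V d 1"
proof -
  have "fdeg d (\<lambda>x. if x \<in> cube d then x i else 0) = fdeg d (\<lambda>x. x i)"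
    by (rule fdeg_cong) simp
  moreover have "x i \<in> V" if "x \<in> cube d" for x
    using cube_coord[OF that, of i] assms(1) by auto
  ultimately show ?thesis
    using fdeg_coord_le_1[OF assms(2)] by (auto simp: Fdk_def Fd_def)
qed

definition relabel :: "nat \<Rightarrow> ((nat \<Rightarrow> real) \<Rightarrow> (nat \<Rightarrow> real)) \<Rightarrow> ((nat \<Rightarrow> real) \<Rightarrow> real)
    \<Rightarrow> ((nat \<Rightarrow> real) \<Rightarrow> real)" where
  "relabel d T h = (\<lambda>y. if y \<in> cube d then h (inv_into (cube d) T y) else 0)"

lemma relabel_apply:
  assumes "bij_betw T (cube d) (cube d)" "z \<in> cube d"
  shows "relabel d T h (T z) = h z"
  using assms by (auto simp: relabel_def bij_betw_def inv_into_f_f)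

lemma relabel_in_Fd:
  assumes "bij_betw T (cube d) (cube d)" "h \<in> Fd V d"
  shows "relabel d T h \<in> Fd V d"
  using assms by (auto simp: relabel_def Fd_def bij_betw_def inv_into_into)

lemma inj_on_relabel:
  assumes T: "bij_betw T (cube d) (cube d)"
  shows "inj_on (relabel d T) (Fd V d)"
proof
  fix h1 h2
  assume h: "h1 \<in> Fd V d" "h2 \<in> Fd V d" "relabel d T h1 = relabel d T h2"
  show "h1 = h2"
  proof
    fix x
    show "h1 x = h2 x"
    proof (cases "x \<in> cube d")
      case True
      then show ?thesis
        using relabel_apply[OF T True, of h1] relabel_apply[OF T True, of h2] h(3) by simp
    next
      case False
      then show ?thesis
        using h by (simp add: Fd_def)
    qed
  qed
qed

lemma relabel_cong:
  assumes "\<And>z. z \<in> cube d \<Longrightarrow> T z = T' z"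
  shows "relabel d T = relabel d T'"
proof -
  have inv: "inv_into (cube d) T y = inv_into (cube d) T' y" for y
    unfolding inv_into_def by (intro arg_cong[where f = Eps] ext) (auto simp: assms)
  show ?thesis
    unfolding relabel_def by (intro ext) (simp add: inv)
qed

lemma relabel_id: "h \<in> Fd V d \<Longrightarrow> relabel d id h = h"
  by (auto simp: relabel_def Fd_def)

lemma task_deg_eq_fdeg_relabel:
  assumes \<Phi>: "\<Phi> \<in> admissible m d \<psi>" and \<psi>: "inj_on \<psi> (cube d)"
  shows "task_deg d \<psi> \<Phi> h = fdeg d (relabel d (\<Phi> \<circ> \<psi>) h)"
proof -
  let ?T = "\<Phi> \<circ> \<psi>"
  let ?H = "Hset (\<psi> ` cube d) (h \<circ> inv_into (cube d) \<psi>)"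
  have T: "bij_betw ?T (cube d) (cube d)"
    using \<Phi> by (simp add: admissible_def)
  have agree: "g \<circ> \<Phi> \<in> ?H \<longleftrightarrow> (\<forall>z\<in>cube d. g (?T z) = h z)" for g
    using \<psi> by (auto simp: Hset_def inv_into_f_f)
  have "g \<circ> \<Phi> \<in> ?H \<Longrightarrow> fdeg d g = fdeg d (relabel d ?T h)" for g
  proof (rule fdeg_cong)
    fix y
    assume "g \<circ> \<Phi> \<in> ?H" "y \<in> cube d"
    moreover obtain z where "z \<in> cube d" "y = ?T z"
      using T \<open>y \<in> cube d\<close> by (auto simp: bij_betw_def)
    ultimately show "g y = relabel d ?T h y"
      using agree relabel_apply[OF T] by simp
  qed
  moreover have "relabel d ?T h \<circ> \<Phi> \<in> ?H"
    using agree relabel_apply[OF T] by simp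
  ultimately have "{fdeg d g | g. g \<circ> \<Phi> \<in> ?H} = {fdeg d (relabel d ?T h)}"
    by blast
  then show ?thesis
    by (simp add: task_deg_def)
qed

text \<open>Exchange argument: \<open>S - A\<close> consists of values \<open>> k\<close>, \<open>A - S\<close> of values \<open>\<le> k\<close>,
  and the two sets have the same size.\<close>

lemma sublevel_set_minimizes_sum:
  fixes \<phi> :: "'a \<Rightarrow> nat"
  assumes U: "finite U" and SU: "S \<subseteq> U" and c: "card S = card A"
    and A: "A = {x\<in>U. \<phi> x \<le> k}"
  shows "sum \<phi> A \<le> sum \<phi> S \<and> (sum \<phi> S = sum \<phi> A \<longrightarrow> S = A)"
proof -
  have fS: "finite S"
    using U SU finite_subset by blast
  have fA: "finite A"
    using U A by simp
  have s1: "sum \<phi> S = sum \<phi> (S \<inter> A) + sum \<phi> (S - A)"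
    using fS by (rule sum.Int_Diff)
  have s2: "sum \<phi> A = sum \<phi> (S \<inter> A) + sum \<phi> (A - S)"
    using sum.Int_Diff[OF fA, of \<phi> S] by (simp add: Int_commute)
  have cc: "card (S - A) = card (A - S)"
    using fS fA c by (simp add: card_Diff_subset_Int Int_commute)
  have b1: "sum \<phi> (A - S) \<le> card (A - S) * k"
    using sum_bounded_above[of "A - S" \<phi> k] A by auto
  have b2: "card (S - A) * (k + 1) \<le> sum \<phi> (S - A)"
    using sum_bounded_below[of "S - A" "k + 1" \<phi>] A SU by (auto simp: not_le Suc_le_eq)
  have e1: "card (S - A) * (k + 1) = card (A - S) * k + card (S - A)"
    by (simp add: cc algebra_simps)
  have le: "sum \<phi> A \<le> sum \<phi> S"
    using s1 s2 b1 b2 e1 by linarith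
  have "S = A" if eq: "sum \<phi> S = sum \<phi> A"
  proof -
    have "card (S - A) = 0"
      using s1 s2 b1 b2 e1 eq by linarith
    then have "S \<subseteq> A"
      using fS by auto
    then show ?thesis
      using card_subset_eq[OF fA] c by simp
  qed
  then show ?thesis
    using le by blast
qed

lemma sum_fdeg_relabel_ge:
  assumes T: "bij_betw T (cube d) (cube d)" and V: "finite V"
  shows "(\<Sum>h\<in>Fdk V d k. fdeg d h) \<le> (\<Sum>h\<in>Fdk V d k. fdeg d (relabel d T h)) \<and>
         ((\<Sum>h\<in>Fdk V d k. fdeg d (relabel d T h)) = (\<Sum>h\<in>Fdk V d k. fdeg d h)
            \<longrightarrow> relabel d T ` Fdk V d k = Fdk V d k)"
proof -
  have sub: "Fdk V d k \<subseteq> Fd V d"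
    by (auto simp: Fdk_def)
  have inj: "inj_on (relabel d T) (Fdk V d k)"
    using inj_on_relabel[OF T] sub by (rule inj_on_subset)
  have "sum (fdeg d) (Fdk V d k) \<le> sum (fdeg d) (relabel d T ` Fdk V d k) \<and>
       (sum (fdeg d) (relabel d T ` Fdk V d k) = sum (fdeg d) (Fdk V d k)
          \<longrightarrow> relabel d T ` Fdk V d k = Fdk V d k)"
  proof (rule sublevel_set_minimizes_sum[where U = "Fd V d"])
    show "finite (Fd V d)"
      using V by (rule finite_Fd)
    show "relabel d T ` Fdk V d k \<subseteq> Fd V d"
      using relabel_in_Fd[OF T] sub by auto
    show "card (relabel d T ` Fdk V d k) = card (Fdk V d k)"
      using inj by (rule card_image)
    show "Fdk V d k = {x \<in> Fd V d. fdeg d x \<le> k}"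
      by (simp add: Fdk_def)
  qed
  then show ?thesis
    using inj by (simp add: sum.reindex)
qed

lemma relabel_preserves_Fdk_1_imp_signed_coord:
  assumes T: "bij_betw T (cube d) (cube d)" and V: "{-1, 1} \<subseteq> V"
    and eq: "relabel d T ` Fdk V d 1 = Fdk V d 1" and i: "i < d"
  shows "\<exists>j<d. \<exists>s\<in>{-1, 1}. \<forall>z\<in>cube d. T z i = s * z j"
proof -
  have Tz: "T z \<in> cube d" if "z \<in> cube d" for z
    using T that by (auto simp: bij_betw_def)
  have surj: "\<exists>z\<in>cube d. T z = y" if "y \<in> cube d" for y
    using T that unfolding bij_betw_def by (metis imageE)
  have "(\<lambda>x. if x \<in> cube d then x i else 0) \<in> relabel d T ` Fdk V d 1"
    using coord_in_Fdk_1[OF V i] by (simp only: eq)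
  then obtain g where g: "g \<in> Fdk V d 1" "(\<lambda>x. if x \<in> cube d then x i else 0) = relabel d T g"
    by (rule imageE)
  have gz: "g z = T z i" if "z \<in> cube d" for z
    using relabel_apply[OF T that, of g] g(2)[symmetric] Tz[OF that] by simp
  have "(\<forall>y\<in>cube d. g y = fhat d g {}) \<or> (\<exists>j<d. \<exists>s\<in>{-1, 1}. \<forall>y\<in>cube d. g y = s * y j)"
  proof (rule boolean_affine_const_or_signed_coord)
    show "g y \<in> {-1, 1}" if "y \<in> cube d" for y
      using gz[OF that] cube_coord[OF Tz[OF that]] by simp
    show "g y = fhat d g {} + (\<Sum>j<d. fhat d g {j} * y j)" if "y \<in> cube d" for y
      using g(1) that by (intro fdeg_le_1_affine) (simp_all add: Fdk_def)
  qed
  moreover have "\<not> (\<forall>y\<in>cube d. g y = c)" for c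
  proof
    assume const: "\<forall>y\<in>cube d. g y = c"
    obtain z1 z2 where z: "z1 \<in> cube d" "T z1 = (\<lambda>_. 1)" "z2 \<in> cube d" "T z2 = (\<lambda>_. 1)(i := -1)"
      using surj[OF one_in_cube] surj[OF fun_upd_in_cube[OF one_in_cube i, of "-1"]] by auto
    then have "T z1 i = T z2 i"
      using const gz by metis
    then show False
      using z by simp
  qed
  ultimately show ?thesis
    using gz by auto
qed

lemma bij_signed_coords_imp_signed_permutation:
  assumes T: "bij_betw T (cube d) (cube d)"
    and coords: "\<And>i. i < d \<Longrightarrow> \<exists>j<d. \<exists>s\<in>{-1, 1}. \<forall>z\<in>cube d. T z i = s * z j"
  shows "\<exists>\<pi> s. \<pi> permutes {..<d} \<and> (\<forall>j<d. s j \<in> {-1, 1::real}) \<and>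
           (\<forall>j<d. \<forall>z\<in>cube d. T z j = s j * z (\<pi> j))"
proof -
  have surj: "\<exists>z\<in>cube d. T z = y" if "y \<in> cube d" for y
    using T that unfolding bij_betw_def by (metis imageE)
  from coords have "\<forall>i. \<exists>j s. i < d \<longrightarrow> j < d \<and> s \<in> {-1, 1::real} \<and> (\<forall>z\<in>cube d. T z i = s * z j)"
    by blast
  then have "\<exists>\<pi>0 s. \<forall>i<d. \<pi>0 i < d \<and> s i \<in> {-1, 1::real} \<and> (\<forall>z\<in>cube d. T z i = s i * z (\<pi>0 i))"
    by (subst (asm) choice_iff, subst (asm) choice_iff) blast
  then obtain \<pi>0 s where F: "\<And>i. i < d \<Longrightarrow> \<pi>0 i < d \<and> s i \<in> {-1, 1} \<and> (\<forall>z\<in>cube d. T z i = s i * z (\<pi>0 i))"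
    by blast
  define \<pi> where "\<pi> i = (if i < d then \<pi>0 i else i)" for i
  have Tf: "T z i = s i * z (\<pi> i)" if "i < d" "z \<in> cube d" for i z
    using F that by (simp add: \<pi>_def)
  have "inj_on \<pi> {..<d}"
  proof
    fix i i'
    assume ii: "i \<in> {..<d}" "i' \<in> {..<d}" "\<pi> i = \<pi> i'"
    show "i = i'"
    proof (rule ccontr)
      assume ne: "i \<noteq> i'"
      have "((\<lambda>_. 1)(i := s i))(i' := - s i') \<in> cube d"
        using ii F by (intro fun_upd_in_cube one_in_cube) auto
      then obtain z where z: "z \<in> cube d" "T z = ((\<lambda>_. 1)(i := s i))(i' := - s i')"
        using surj by blast
      have "s i = s i * z (\<pi> i)" "- s i' = s i' * z (\<pi> i)"
        using Tf[of i z] Tf[of i' z] z ii ne by simp_all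
      then show False
        using F[of i] F[of i'] ii by auto
    qed
  qed
  moreover have "\<pi> ` {..<d} \<subseteq> {..<d}"
    using F by (auto simp: \<pi>_def)
  ultimately have "bij_betw \<pi> {..<d} {..<d}"
    by (simp add: bij_betw_def endo_inj_surj)
  then have "\<pi> permutes {..<d}"
    by (rule bij_imp_permutes) (simp add: \<pi>_def)
  then show ?thesis
    using F Tf by blast
qed

section \<open>The limit objective\<close>

lemma set_pmf_subset_if_sum_pmf_eq_1:
  assumes "finite A" "(\<Sum>i\<in>A. pmf K i) = 1"
  shows "set_pmf K \<subseteq> A"
proof
  fix x
  assume x: "x \<in> set_pmf K"
  show "x \<in> A"
  proof (rule ccontr)
    assume "x \<notin> A"
    then have "measure_pmf.prob K (insert x A) = pmf K x + 1"
      using assms by (simp add: measure_measure_pmf_finite)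
    moreover have "pmf K x > 0"
      using x by (simp add: set_pmf_eq')
    ultimately show False
      using measure_pmf.prob_le_1[of K "insert x A"] by simp
  qed
qed

lemma expectation_task_pmf:
  assumes V: "finite V" "1 \<in> V" and K: "set_pmf K \<subseteq> {1..d}"
  shows "measure_pmf.expectation (task_pmf V d K) g
      = (\<Sum>k\<in>{1..d}. pmf K k * ((\<Sum>h\<in>Fdk V d k. g h) / real (card (Fdk V d k))))"
  unfolding task_pmf_def
  by (subst pmf_expectation_bind[of "{1..d}"])
    (use V K in \<open>auto simp: finite_Fdk Fdk_nonempty integral_pmf_of_set\<close>)

text \<open>The limit of the objective for a representation \<open>\<Phi>\<close> with \<open>T = \<Phi> \<circ> \<psi>\<close>.\<close>

definition expected_deg :: "real set \<Rightarrow> nat \<Rightarrow> nat pmf \<Rightarrow> ((nat \<Rightarrow> real) \<Rightarrow> (nat \<Rightarrow> real)) \<Rightarrow> real" where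
  "expected_deg V d K T = measure_pmf.expectation (task_pmf V d K) (\<lambda>h. real (fdeg d (relabel d T h)))"

lemma expected_deg_cong:
  "(\<And>z. z \<in> cube d \<Longrightarrow> T z = T' z) \<Longrightarrow> expected_deg V d K T = expected_deg V d K T'"
  unfolding expected_deg_def by (simp add: relabel_cong[of d T T'])

lemma expected_deg_le_id_imp_relabel_preserves_Fdk:
  assumes T: "bij_betw T (cube d) (cube d)" and V: "finite V" "1 \<in> V"
    and K: "set_pmf K \<subseteq> {1..d}" and k: "k \<in> {1..d}" "pmf K k > 0"
    and le: "expected_deg V d K T \<le> expected_deg V d K id"
  shows "relabel d T ` Fdk V d k = Fdk V d k"
proof -
  define c where "c j = real (card (Fdk V d j))" for j
  define a where "a j = (\<Sum>h\<in>Fdk V d j. real (fdeg d h))" for j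
  define b where "b j = (\<Sum>h\<in>Fdk V d j. real (fdeg d (relabel d T h)))" for j
  define t where "t j = pmf K j * ((b j - a j) / c j)" for j
  have c: "c j > 0" for j
    using finite_Fdk[OF V(1)] Fdk_nonempty[OF V(2)] by (simp add: c_def card_gt_0_iff)
  have ab: "a j \<le> b j" "b j = a j \<Longrightarrow> relabel d T ` Fdk V d j = Fdk V d j" for j
    using sum_fdeg_relabel_ge[OF T V(1), of j] unfolding a_def b_def by (simp_all flip: of_nat_sum)
  have t: "t j \<ge> 0" for j
    using ab(1)[of j] c[of j] by (simp add: t_def)
  have "relabel d id h = h" if "h \<in> Fdk V d j" for h j
    using that relabel_id[of h V d] by (simp add: Fdk_def)
  then have "expected_deg V d K id = (\<Sum>j\<in>{1..d}. pmf K j * (a j / c j))"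
    unfolding expected_deg_def expectation_task_pmf[OF V K] a_def c_def by (simp cong: sum.cong)
  moreover have "expected_deg V d K T = (\<Sum>j\<in>{1..d}. pmf K j * (b j / c j))"
    unfolding expected_deg_def expectation_task_pmf[OF V K] b_def c_def ..
  ultimately have "(\<Sum>j\<in>{1..d}. t j) \<le> 0"
    using le by (simp add: t_def diff_divide_distrib right_diff_distrib sum_subtractf)
  then have "t k = 0"
    using t k(1) by (meson finite_atLeastAtMost order_antisym sum_nonneg sum_nonneg_eq_0_iff)
  then have "b k = a k"
    using k(2) c[of k] by (simp add: t_def)
  then show ?thesis
    by (rule ab(2))
qed

lemma AE_mean_fdeg_relabel_tendsto:
  "AE w in stream_space (measure_pmf (task_pmf V d K)).
     \<forall>T\<in>cube d \<rightarrow>\<^sub>E cube d.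
       (\<lambda>n. (\<Sum>i<n. real (fdeg d (relabel d T (w !! i)))) / real n) \<longlonglongrightarrow> expected_deg V d K T"
  unfolding expected_deg_def
proof (rule AE_finite_allI)
  show "finite (cube d \<rightarrow>\<^sub>E cube d)"
    by (intro finite_PiE finite_cube)
  show "AE w in stream_space (measure_pmf (task_pmf V d K)).
          (\<lambda>n. (\<Sum>i<n. real (fdeg d (relabel d T (w !! i)))) / real n) \<longlonglongrightarrow>
            measure_pmf.expectation (task_pmf V d K) (\<lambda>h. real (fdeg d (relabel d T h)))" for T
  proof (rule AE_sample_mean_tendsto[where a = 0 and b = "real d + 1"])
    show "real (fdeg d (relabel d T h)) \<in> {0..real d + 1}" for h
      using fdeg_le_dim[of d "relabel d T h"] by simp
  qed simp
qed

lemma objective_tendsto_expected_deg: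
  assumes \<Phi>: "\<Phi> \<in> admissible m d \<psi>" and \<psi>: "inj_on \<psi> (cube d)"
    and lim: "\<forall>T\<in>cube d \<rightarrow>\<^sub>E cube d.
       (\<lambda>n. (\<Sum>i<n. real (fdeg d (relabel d T (w !! i)))) / real n) \<longlonglongrightarrow> expected_deg V d K T"
  shows "objective m d \<psi> \<Phi> w \<longlonglongrightarrow> expected_deg V d K (\<Phi> \<circ> \<psi>)"
proof -
  let ?T = "restrict (\<Phi> \<circ> \<psi>) (cube d)"
  let ?C = "\<Sum>j<d. real (fdeg m (\<lambda>x. \<Phi> x j))"
  have T: "?T \<in> cube d \<rightarrow>\<^sub>E cube d"
    using \<Phi> by (auto simp: admissible_def bij_betw_def)
  have rel: "relabel d ?T = relabel d (\<Phi> \<circ> \<psi>)" "expected_deg V d K ?T = expected_deg V d K (\<Phi> \<circ> \<psi>)"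
    by (simp_all add: relabel_cong[of d ?T "\<Phi> \<circ> \<psi>"] expected_deg_cong[of d ?T "\<Phi> \<circ> \<psi>"])
  have mean: "(\<lambda>n. (\<Sum>i<n. real (fdeg d (relabel d (\<Phi> \<circ> \<psi>) (w !! i)))) / real n)
      \<longlonglongrightarrow> expected_deg V d K (\<Phi> \<circ> \<psi>)"
    using lim[rule_format, OF T] unfolding rel .
  have "objective m d \<psi> \<Phi> w
      = (\<lambda>n. (\<Sum>i<n. real (fdeg d (relabel d (\<Phi> \<circ> \<psi>) (w !! i)))) / real n + ?C / real n)"
    by (simp add: fun_eq_iff objective_def task_deg_eq_fdeg_relabel[OF \<Phi> \<psi>] add_divide_distrib)
  moreover have "\<dots> \<longlonglongrightarrow> expected_deg V d K (\<Phi> \<circ> \<psi>) + 0"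
    using mean by (intro tendsto_add lim_const_over_n)
  ultimately show ?thesis
    by simp
qed

text \<open>A representation recovering the latent variable exactly; its values off \<open>\<psi> ` cube d\<close>
  are irrelevant.\<close>

definition canonical_rep :: "nat \<Rightarrow> ((nat \<Rightarrow> real) \<Rightarrow> (nat \<Rightarrow> real)) \<Rightarrow> (nat \<Rightarrow> real) \<Rightarrow> (nat \<Rightarrow> real)" where
  "canonical_rep d \<psi> x = (if x \<in> \<psi> ` cube d then inv_into (cube d) \<psi> x else (\<lambda>_. 1))"

lemma canonical_rep_apply:
  "inj_on \<psi> (cube d) \<Longrightarrow> z \<in> cube d \<Longrightarrow> canonical_rep d \<psi> (\<psi> z) = z"
  by (simp add: canonical_rep_def inv_into_f_f)

lemma canonical_rep_admissible:
  assumes "inj_on \<psi> (cube d)"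
  shows "canonical_rep d \<psi> \<in> admissible m d \<psi>"
proof -
  have "bij_betw (canonical_rep d \<psi> \<circ> \<psi>) (cube d) (cube d)"
    by (rule bij_betw_cong[THEN iffD2, OF _ bij_betw_id]) (simp add: canonical_rep_apply[OF assms])
  moreover have "canonical_rep d \<psi> x \<in> cube d" for x
    by (auto simp: canonical_rep_def inv_into_into one_in_cube)
  ultimately show ?thesis
    by (simp add: admissible_def)
qed

theorem theorem4:
  fixes m d :: nat and \<psi> :: "(nat \<Rightarrow> real) \<Rightarrow> (nat \<Rightarrow> real)"
    and V :: "real set" and K :: "nat pmf"
  assumes "1 \<le> d" and "d \<le> m"
    and "\<psi> ` cube d \<subseteq> cube m" and "inj_on \<psi> (cube d)"
    and "finite V" and "{-1, 1} \<subseteq> V"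
    and "\<forall>i\<in>{1..d}. 0 < pmf K i \<and> pmf K i < 1"
    and "(\<Sum>i=1..d. pmf K i) = 1"
  shows "AE w in stream_space (measure_pmf (task_pmf V d K)).
           (\<forall>\<Phi>\<in>admissible m d \<psi>. convergent (objective m d \<psi> \<Phi> w)) \<and>
           (\<forall>\<Phi>s\<in>admissible m d \<psi>.
              (\<forall>\<Phi>\<in>admissible m d \<psi>. lim (objective m d \<psi> \<Phi>s w) \<le> lim (objective m d \<psi> \<Phi> w)) \<longrightarrow>
              (\<exists>\<pi> s. \<pi> permutes {..<d} \<and> (\<forall>j<d. s j \<in> {-1, 1::real}) \<and>
                 (\<forall>j<d. \<forall>z\<in>cube d. \<Phi>s (\<psi> z) j = s j * z (\<pi> j))))"
  using AE_mean_fdeg_relabel_tendsto[where V = V and d = d and K = K]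
proof eventually_elim
  case (elim w)
  have K: "set_pmf K \<subseteq> {1..d}"
    using assms(8) by (intro set_pmf_subset_if_sum_pmf_eq_1) simp_all
  have lim: "objective m d \<psi> \<Phi> w \<longlonglongrightarrow> expected_deg V d K (\<Phi> \<circ> \<psi>)" if "\<Phi> \<in> admissible m d \<psi>" for \<Phi>
    using that assms(4) elim by (rule objective_tendsto_expected_deg)
  have "\<exists>\<pi> s. \<pi> permutes {..<d} \<and> (\<forall>j<d. s j \<in> {-1, 1::real}) \<and>
          (\<forall>j<d. \<forall>z\<in>cube d. \<Phi>s (\<psi> z) j = s j * z (\<pi> j))"
    if \<Phi>s: "\<Phi>s \<in> admissible m d \<psi>"
      and min: "\<forall>\<Phi>\<in>admissible m d \<psi>. lim (objective m d \<psi> \<Phi>s w) \<le> lim (objective m d \<psi> \<Phi> w)"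
    for \<Phi>s
  proof -
    have T: "bij_betw (\<Phi>s \<circ> \<psi>) (cube d) (cube d)"
      using \<Phi>s by (simp add: admissible_def)
    have "expected_deg V d K (\<Phi>s \<circ> \<psi>) \<le> expected_deg V d K (canonical_rep d \<psi> \<circ> \<psi>)"
      using min canonical_rep_admissible[OF assms(4)] lim[THEN limI] \<Phi>s by metis
    also have "\<dots> = expected_deg V d K id"
      by (rule expected_deg_cong) (simp add: canonical_rep_apply[OF assms(4)])
    finally have "relabel d (\<Phi>s \<circ> \<psi>) ` Fdk V d 1 = Fdk V d 1"
      using assms(1,5,6,7) by (intro expected_deg_le_id_imp_relabel_preserves_Fdk[OF T _ _ K]) auto
    then show ?thesis
      using bij_signed_coords_imp_signed_permutation[OF T]
        relabel_preserves_Fdk_1_imp_signed_coord[OF T assms(6)] by simp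
  qed
  then show ?case
    using lim unfolding convergent_def by blast
qed

end
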